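(* The VCCR $scwc$ satisfies Availability; in fact, $scwc(\mathbf P)$ is acyclic for every linear profile $\mathbf P$.
   Context: Profiles: $\mathbf P:V\to\mathcal L(X)$, $V$ nonempty finite set of voters, $X=X(\mathbf P)$ nonempty finite set of candidates, $\mathcal L(X)$ strict linear orders. $\mathrm{Margin}_{\mathbf P}(x,y)$ = #voters ranking $x$ above $y$ minus #ranking $y$ above $x$. Majority path: sequence of candidates with positive consecutive margins; strength = minimum of those margins. $(x,y)\in sc(\mathbf P)$ iff $\mathrm{Margin}_{\mathbf P}(x,y)>0$ exceeds the strength of every majority path from $y$ to $x$. $(x,y)\in wc(\mathbf P)$ iff $\mathrm{Margin}_{\mathbf P}(x,y)>0$ and $\mathrm{Margin}_{\mathbf P}(x,z)\ge\mathrm{Margin}_{\mathbf P}(y,z)$ for all $z\in X(\mathbf P)$. $scwc(\mathbf P)=sc(\mathbf P)\cup wc(\mathbf P)$. Availability: for every profile some candidate $x$ has no $y$ with $(y,x)\in scwc(\mathbf P)$. *)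

theory Defs
  imports Main
begin

text \<open>A profile on voters V and candidates X: each voter i in V gets a strict
linear order P i on X (represented as a relation: (x,y) in P i means i ranks x above y).\<close>

definition strict_linear_order_on :: "'c set \<Rightarrow> ('c \<times> 'c) set \<Rightarrow> bool" where
  "strict_linear_order_on X R \<longleftrightarrow> R \<subseteq> X \<times> X \<and> irrefl R \<and> trans R \<and> total_on X R"

definition profile :: "'v set \<Rightarrow> 'c set \<Rightarrow> ('v \<Rightarrow> ('c \<times> 'c) set) \<Rightarrow> bool" where
  "profile V X P \<longleftrightarrow> finite V \<and> V \<noteq> {} \<and> finite X \<and> X \<noteq> {} \<and>
     (\<forall>i\<in>V. strict_linear_order_on X (P i))"

definition margin :: "'v set \<Rightarrow> ('v \<Rightarrow> ('c \<times> 'c) set) \<Rightarrow> 'c \<Rightarrow> 'c \<Rightarrow> int" where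
  "margin V P x y = int (card {i\<in>V. (x, y) \<in> P i}) - int (card {i\<in>V. (y, x) \<in> P i})"

definition majority_path :: "'v set \<Rightarrow> 'c set \<Rightarrow> ('v \<Rightarrow> ('c \<times> 'c) set) \<Rightarrow> 'c list \<Rightarrow> bool" where
  "majority_path V X P p \<longleftrightarrow> length p \<ge> 2 \<and> distinct p \<and> set p \<subseteq> X \<and>
     (\<forall>k. Suc k < length p \<longrightarrow> margin V P (p ! k) (p ! Suc k) > 0)"

definition path_strength :: "'v set \<Rightarrow> ('v \<Rightarrow> ('c \<times> 'c) set) \<Rightarrow> 'c list \<Rightarrow> int" where
  "path_strength V P p = Min {margin V P (p ! k) (p ! Suc k) | k. Suc k < length p}"

definition sc :: "'v set \<Rightarrow> 'c set \<Rightarrow> ('v \<Rightarrow> ('c \<times> 'c) set) \<Rightarrow> ('c \<times> 'c) set" where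
  "sc V X P = {(x, y). x \<in> X \<and> y \<in> X \<and> margin V P x y > 0 \<and>
     (\<forall>p. majority_path V X P p \<and> hd p = y \<and> last p = x \<longrightarrow>
          margin V P x y > path_strength V P p)}"

definition wc :: "'v set \<Rightarrow> 'c set \<Rightarrow> ('v \<Rightarrow> ('c \<times> 'c) set) \<Rightarrow> ('c \<times> 'c) set" where
  "wc V X P = {(x, y). x \<in> X \<and> y \<in> X \<and> margin V P x y > 0 \<and>
     (\<forall>z\<in>X. margin V P x z \<ge> margin V P y z)}"

definition scwc :: "'v set \<Rightarrow> 'c set \<Rightarrow> ('v \<Rightarrow> ('c \<times> 'c) set) \<Rightarrow> ('c \<times> 'c) set" where
  "scwc V X P = sc V X P \<union> wc V X P"

end

theory Submission
  imports Defs "HOL-Library.Transitive_Closure_Table"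
begin

(*
  Let margin_graph t be the graph of pairs with margin at least t. Then (x, y) is in sc exactly
  when Margin(x, y) > 0 and y does not reach x in margin_graph (Margin(x, y)). So sc is acyclic:
  the rest of an sc-cycle would be a return path beating the cycle's weakest edge.
  If (x, y) is in wc, then x does at least as well as y against every candidate, so in such
  paths an arrival at x may be redirected to y and a departure from y may start at x instead.
  Hence wc is transitive and irreflexive, and wc O sc and sc O wc lie in sc; every scwc-cycle
  therefore collapses to a wc-loop or an sc-cycle. A finite acyclic relation leaves some
  candidate undominated, which is Availability.
*)

definition margin_graph :: "'v set \<Rightarrow> 'c set \<Rightarrow> ('v \<Rightarrow> ('c \<times> 'c) set) \<Rightarrow> int \<Rightarrow> ('c \<times> 'c) set" where
  "margin_graph V X P t = {(u, v). u \<in> X \<and> v \<in> X \<and> t \<le> margin V P u v}"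

lemma margin_antisym: "margin V P x y = - margin V P y x"
  unfolding margin_def by simp

lemma margin_self [simp]: "margin V P x x = 0"
  unfolding margin_def by simp

lemma margin_graph_antimono: "s \<le> t \<Longrightarrow> margin_graph V X P t \<subseteq> margin_graph V X P s"
  unfolding margin_graph_def by auto

lemma rtrancl_path_iff_successively:
  "rtrancl_path r x xs y \<longleftrightarrow> successively r (x # xs) \<and> last (x # xs) = y"
proof (induction xs arbitrary: x)
  case Nil
  show ?case by (auto elim: rtrancl_path.cases intro: rtrancl_path.base)
next
  case (Cons z zs)
  have "rtrancl_path r x (z # zs) y \<longleftrightarrow> r x z \<and> rtrancl_path r z zs y"
    by (auto elim: rtrancl_path.cases intro: rtrancl_path.step)
  then show ?case
    by (simp add: Cons.IH)
qed

lemma path_strength_ge_iff: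
  assumes "2 \<le> length p"
  shows "t \<le> path_strength V P p \<longleftrightarrow> (\<forall>k. Suc k < length p \<longrightarrow> t \<le> margin V P (p ! k) (p ! Suc k))"
proof -
  have steps: "{margin V P (p ! k) (p ! Suc k) | k. Suc k < length p} =
      (\<lambda>k. margin V P (p ! k) (p ! Suc k)) ` {..<length p - 1}"
    by auto
  show ?thesis
    unfolding path_strength_def steps using assms by (subst Min_ge_iff) (auto simp: lessThan_empty_iff)
qed

lemma majority_path_in_trancl:
  assumes path: "majority_path V X P p" and strength: "t \<le> path_strength V P p"
  shows "(hd p, last p) \<in> (margin_graph V X P t)\<^sup>+"
proof -
  let ?r = "\<lambda>u v. (u, v) \<in> margin_graph V X P t"
  from path have len: "2 \<le> length p" and "distinct p"
    unfolding majority_path_def by auto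
  then have "hd p \<noteq> last p"
    by (cases p) (auto split: if_splits dest: last_in_set)
  have "successively ?r p"
    using path strength len unfolding successively_conv_nth majority_path_def margin_graph_def
    by (auto simp: path_strength_ge_iff)
  then have "rtrancl_path ?r (hd p) (tl p) (last p)"
    using len by (cases p) (simp_all add: rtrancl_path_iff_successively)
  then have "?r\<^sup>*\<^sup>* (hd p) (last p)"
    unfolding rtranclp_eq_rtrancl_path by blast
  with \<open>hd p \<noteq> last p\<close> show ?thesis
    by (simp add: rtranclp_rtrancl_eq rtrancl_eq_or_trancl)
qed

lemma trancl_imp_majority_path:
  assumes "0 < t" and "a \<noteq> b" and "(a, b) \<in> (margin_graph V X P t)\<^sup>+"
  obtains p where "majority_path V X P p" and "hd p = a" and "last p = b"
    and "t \<le> path_strength V P p"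
proof -
  let ?r = "\<lambda>u v. (u, v) \<in> margin_graph V X P t"
  from assms(3) have "?r\<^sup>*\<^sup>* a b"
    by (auto simp: rtranclp_rtrancl_eq)
  then obtain ys where "rtrancl_path ?r a ys b"
    unfolding rtranclp_eq_rtrancl_path by blast
  then obtain xs where path: "rtrancl_path ?r a xs b" and "distinct (a # xs)"
    by (rule rtrancl_path_distinct)
  define p where "p = a # xs"
  have "xs \<noteq> []"
    using path \<open>a \<noteq> b\<close> by (auto elim: rtrancl_path.cases)
  then have len: "2 \<le> length p"
    unfolding p_def by (cases xs) auto
  have steps: "successively ?r p" and "last p = b"
    using path unfolding p_def rtrancl_path_iff_successively by auto
  have step: "?r (p ! k) (p ! Suc k)" if "Suc k < length p" for k
    using successively_nth[OF steps that] by simp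
  have "a \<in> X"
    using step[of 0] len unfolding p_def margin_graph_def by (auto simp: Suc_le_eq)
  moreover have "set xs \<subseteq> X"
    using rtrancl_path_Range[OF path] unfolding margin_graph_def by blast
  ultimately have "majority_path V X P p"
    using len \<open>distinct (a # xs)\<close> step \<open>0 < t\<close>
    unfolding majority_path_def margin_graph_def by (auto simp: p_def intro: less_le_trans)
  moreover have "t \<le> path_strength V P p"
    using len step unfolding margin_graph_def by (simp add: path_strength_ge_iff)
  ultimately show ?thesis
    using that \<open>last p = b\<close> unfolding p_def by simp
qed

lemma strong_majority_path_iff_trancl:
  assumes "0 < t" and "a \<noteq> b"
  shows "(\<exists>p. majority_path V X P p \<and> hd p = a \<and> last p = b \<and> t \<le> path_strength V P p)
    \<longleftrightarrow> (a, b) \<in> (margin_graph V X P t)\<^sup>+"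
  using majority_path_in_trancl trancl_imp_majority_path[OF assms] by blast

lemma sc_iff_trancl:
  "(x, y) \<in> sc V X P \<longleftrightarrow> x \<in> X \<and> y \<in> X \<and> 0 < margin V P x y \<and>
     (y, x) \<notin> (margin_graph V X P (margin V P x y))\<^sup>+"
proof -
  have "(\<forall>p. majority_path V X P p \<and> hd p = y \<and> last p = x \<longrightarrow> path_strength V P p < margin V P x y)
      \<longleftrightarrow> (y, x) \<notin> (margin_graph V X P (margin V P x y))\<^sup>+"
    if pos: "0 < margin V P x y"
  proof -
    have "y \<noteq> x"
      using pos by auto
    from strong_majority_path_iff_trancl[OF pos this, where V = V and X = X and P = P]
    show ?thesis
      by (auto simp: not_le)
  qed
  then show ?thesis
    unfolding sc_def by auto
qed

lemma wc_trans: "(x, y) \<in> wc V X P \<Longrightarrow> (y, z) \<in> wc V X P \<Longrightarrow> (x, z) \<in> wc V X P"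
  unfolding wc_def by clarsimp (meson order_trans less_le_trans)

lemma wc_irrefl: "(x, x) \<notin> wc V X P"
  unfolding wc_def by simp

lemma margin_graph_wc_target:
  "(x, y) \<in> wc V X P \<Longrightarrow> (u, x) \<in> margin_graph V X P t \<Longrightarrow> (u, y) \<in> margin_graph V X P t"
  unfolding wc_def margin_graph_def by (force simp: margin_antisym[of V P u])

lemma margin_graph_wc_source:
  "(x, y) \<in> wc V X P \<Longrightarrow> (y, u) \<in> margin_graph V X P t \<Longrightarrow> (x, u) \<in> margin_graph V X P t"
  unfolding wc_def margin_graph_def by force

lemma wc_sc_subset: "wc V X P O sc V X P \<subseteq> sc V X P"
proof clarify
  fix x y w
  assume xy: "(x, y) \<in> wc V X P" and yw: "(y, w) \<in> sc V X P"
  from yw have "w \<in> X" and pos: "0 < margin V P y w"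
    and no_return: "(w, y) \<notin> (margin_graph V X P (margin V P y w))\<^sup>+"
    unfolding sc_iff_trancl by auto
  from xy \<open>w \<in> X\<close> have "x \<in> X" and stronger: "margin V P y w \<le> margin V P x w"
    unfolding wc_def by auto
  let ?G = "margin_graph V X P (margin V P x w)"
  have "(w, x) \<notin> ?G\<^sup>+"
  proof
    assume "(w, x) \<in> ?G\<^sup>+"
    then obtain u where wu: "(w, u) \<in> ?G\<^sup>*" and "(u, x) \<in> ?G"
      by (blast dest: tranclD2)
    from \<open>(u, x) \<in> ?G\<close> have "(u, y) \<in> ?G"
      by (rule margin_graph_wc_target[OF xy])
    with wu have "(w, y) \<in> ?G\<^sup>+"
      by (rule rtrancl_into_trancl1)
    with no_return show False
      using trancl_mono[OF _ margin_graph_antimono[OF stronger]] by blast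
  qed
  with \<open>x \<in> X\<close> \<open>w \<in> X\<close> pos stronger show "(x, w) \<in> sc V X P"
    unfolding sc_iff_trancl by simp
qed

lemma sc_wc_subset: "sc V X P O wc V X P \<subseteq> sc V X P"
proof clarify
  fix y w v
  assume yw: "(y, w) \<in> sc V X P" and wv: "(w, v) \<in> wc V X P"
  from yw have "y \<in> X" and pos: "0 < margin V P y w"
    and no_return: "(w, y) \<notin> (margin_graph V X P (margin V P y w))\<^sup>+"
    unfolding sc_iff_trancl by auto
  from wv \<open>y \<in> X\<close> have "v \<in> X" and "margin V P v y \<le> margin V P w y"
    unfolding wc_def by auto
  then have stronger: "margin V P y w \<le> margin V P y v"
    by (simp add: margin_antisym[of V P y])
  let ?G = "margin_graph V X P (margin V P y v)"
  have "(v, y) \<notin> ?G\<^sup>+"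
  proof
    assume "(v, y) \<in> ?G\<^sup>+"
    then obtain u where "(v, u) \<in> ?G" and uy: "(u, y) \<in> ?G\<^sup>*"
      by (blast dest: tranclD)
    from \<open>(v, u) \<in> ?G\<close> have "(w, u) \<in> ?G"
      by (rule margin_graph_wc_source[OF wv])
    from this uy have "(w, y) \<in> ?G\<^sup>+"
      by (rule rtrancl_into_trancl2)
    with no_return show False
      using trancl_mono[OF _ margin_graph_antimono[OF stronger]] by blast
  qed
  with \<open>y \<in> X\<close> \<open>v \<in> X\<close> pos stronger show "(y, v) \<in> sc V X P"
    unfolding sc_iff_trancl by simp
qed

lemma acyclic_if_no_heavier_return_path:
  fixes w :: "'a \<Rightarrow> 'a \<Rightarrow> 'b :: linordered_ab_group_add"
  assumes "finite E"
    and no_return: "\<And>a b. (a, b) \<in> E \<Longrightarrow> (b, a) \<notin> {(u, v) \<in> E. w a b \<le> w u v}\<^sup>+"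
  shows "acyclic E"
proof -
  have "acyclic S" if "finite S" "S \<subseteq> E" for S
    using that
    \<comment> \<open>edges are added in order of decreasing weight, so a new cycle runs through the lightest edge\<close>
  proof (induction S rule: finite_ranking_induct[where f = "\<lambda>(u, v). - w u v"])
    case empty
    show ?case by (simp add: acyclic_def)
  next
    case (insert e S)
    obtain a b where e: "e = (a, b)" by fastforce
    let ?H = "{(u, v) \<in> E. w a b \<le> w u v}"
    have "(a, b) \<in> ?H" and "S \<subseteq> ?H"
      using insert.hyps(2) insert.prems e by force+
    have "acyclic S"
      using insert.IH insert.prems by blast
    show ?case
    proof (rule ccontr)
      assume "\<not> acyclic (insert e S)"
      then obtain c where "(c, c) \<in> (insert (a, b) S)\<^sup>+"
        unfolding acyclic_def e by blast
      with \<open>acyclic S\<close> have "(b, a) \<in> S\<^sup>*"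
        unfolding trancl_insert acyclic_def by (blast intro: rtrancl_trans)
      then have "(b, a) \<in> ?H\<^sup>*"
        using rtrancl_mono[OF \<open>S \<subseteq> ?H\<close>] by blast
      with \<open>(a, b) \<in> ?H\<close> have "(b, a) \<in> ?H\<^sup>+"
        by (cases "a = b") (auto simp: rtrancl_eq_or_trancl)
      with no_return[of a b] insert.prems e show False
        by auto
    qed
  qed
  then show ?thesis
    using \<open>finite E\<close> by blast
qed

lemma acyclic_sc:
  assumes "finite X"
  shows "acyclic (sc V X P)"
proof (rule acyclic_if_no_heavier_return_path[where w = "margin V P"])
  have "sc V X P \<subseteq> X \<times> X"
    unfolding sc_def by auto
  then show "finite (sc V X P)"
    by (rule finite_subset) (simp add: assms)
next
  fix a b
  let ?H = "{(u, v) \<in> sc V X P. margin V P a b \<le> margin V P u v}"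
  assume "(a, b) \<in> sc V X P"
  then have "(b, a) \<notin> (margin_graph V X P (margin V P a b))\<^sup>+"
    unfolding sc_iff_trancl by simp
  moreover have "?H \<subseteq> margin_graph V X P (margin V P a b)"
    unfolding sc_def margin_graph_def by auto
  ultimately show "(b, a) \<notin> ?H\<^sup>+"
    using trancl_mono by blast
qed

lemma trancl_scwc_subset: "(scwc V X P)\<^sup>+ \<subseteq> wc V X P \<union> (sc V X P)\<^sup>+"
proof (rule subrelI)
  fix x z
  assume "(x, z) \<in> (scwc V X P)\<^sup>+"
  then show "(x, z) \<in> wc V X P \<union> (sc V X P)\<^sup>+"
  proof (induction rule: trancl_induct)
    case (base z)
    then show ?case
      unfolding scwc_def by auto
  next
    case (step y z)
    from step.hyps(2) have yz: "(y, z) \<in> wc V X P \<or> (y, z) \<in> sc V X P"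
      unfolding scwc_def by blast
    from step.IH show ?case
    proof
      assume xy: "(x, y) \<in> wc V X P"
      from yz show ?thesis
      proof
        assume "(y, z) \<in> wc V X P"
        with xy show ?thesis
          by (blast intro: wc_trans)
      next
        assume "(y, z) \<in> sc V X P"
        with xy have "(x, z) \<in> sc V X P"
          using wc_sc_subset by blast
        then show ?thesis
          by blast
      qed
    next
      assume xy: "(x, y) \<in> (sc V X P)\<^sup>+"
      then obtain u where xu: "(x, u) \<in> (sc V X P)\<^sup>*" and uy: "(u, y) \<in> sc V X P"
        by (blast dest: tranclD2)
      from yz show ?thesis
      proof
        assume "(y, z) \<in> wc V X P"
        with uy have "(u, z) \<in> sc V X P"
          using sc_wc_subset by blast
        with xu show ?thesis
          by (blast intro: rtrancl_into_trancl1)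
      next
        assume "(y, z) \<in> sc V X P"
        with xy show ?thesis
          by (blast intro: trancl_into_trancl)
      qed
    qed
  qed
qed

lemma acyclic_scwc:
  assumes "finite X"
  shows "acyclic (scwc V X P)"
  unfolding acyclic_def
proof
  fix x
  have "(x, x) \<notin> (sc V X P)\<^sup>+"
    using acyclic_sc[OF assms] unfolding acyclic_def by blast
  with wc_irrefl[of x V X P] show "(x, x) \<notin> (scwc V X P)\<^sup>+"
    using trancl_scwc_subset[of V X P] by blast
qed

lemma acyclic_ex_undominated:
  assumes "finite X" and "X \<noteq> {}" and "R \<subseteq> X \<times> X" and "acyclic R"
  shows "\<exists>x\<in>X. \<forall>y. (y, x) \<notin> R"
proof -
  have "finite R"
    using finite_subset[OF \<open>R \<subseteq> X \<times> X\<close>] \<open>finite X\<close> by simp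
  then have "wf R"
    using \<open>acyclic R\<close> by (rule finite_acyclic_wf)
  then obtain x where "x \<in> X" and "\<And>y. (y, x) \<in> R \<Longrightarrow> y \<notin> X"
    using \<open>X \<noteq> {}\<close> by (rule wfE_min') blast
  then show ?thesis
    using \<open>R \<subseteq> X \<times> X\<close> by blast
qed

theorem proposition8p2:
  fixes V :: "'v set" and X :: "'c set" and P :: "'v \<Rightarrow> ('c \<times> 'c) set"
  assumes "profile V X P"
  shows "(\<exists>x\<in>X. \<forall>y. (y, x) \<notin> scwc V X P) \<and> acyclic (scwc V X P)"
proof -
  have "finite X" and "X \<noteq> {}"
    using assms unfolding profile_def by auto
  moreover have "scwc V X P \<subseteq> X \<times> X"
    unfolding scwc_def sc_def wc_def by auto
  moreover have "acyclic (scwc V X P)"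
    using \<open>finite X\<close> by (rule acyclic_scwc)
  ultimately show ?thesis
    using acyclic_ex_undominated by blast
qed

end
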